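(* Let $\mathcal E$ be a nest on a complex Banach space $X$, let $\Phi$ be a support function on $\mathcal E$ and let $T\in\mathcal M(\Phi)$ be an operator of rank $n$. Then $T$ can be written as a sum of $n$ rank-one operators each lying in $\mathcal M(\Phi)$.
   Context: A nest $\mathcal E$ on $X$ is a family of closed linear subspaces of $X$, totally ordered by inclusion, containing $\{0\}$ and $X$, closed under arbitrary meets (intersections) and joins (norm-closed linear spans of unions). A support function on $\mathcal E$ is an inclusion-preserving map $\Phi:\mathcal E\to\mathcal E$. $\mathcal M(\Phi)=\{T\in\mathcal B(X): TE\subseteq\Phi(E)\ \forall E\in\mathcal E\}$. *)

theory Defs
  imports "HOL-Analysis.Analysis"
begin

text \<open>Isabelle/HOL has no library class of complex normed spaces, so we introduce one:
  a real normed vector space with a compatible complex scalar multiplication.\<close>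

class complex_normed_space = real_normed_vector +
  fixes scaleC :: "complex \<Rightarrow> 'a \<Rightarrow> 'a"
  assumes scaleC_add_right: "scaleC a (x + y) = scaleC a x + scaleC a y"
    and scaleC_add_left: "scaleC (a + b) x = scaleC a x + scaleC b x"
    and scaleC_scaleC: "scaleC a (scaleC b x) = scaleC (a * b) x"
    and scaleC_one: "scaleC 1 x = x"
    and scaleC_of_real: "scaleC (complex_of_real r) x = scaleR r x"
    and norm_scaleC: "norm (scaleC a x) = cmod a * norm x"

text \<open>Complex Banach space = complete complex normed space: use sort
  {complex_normed_space, banach}.\<close>

definition csubspace :: "'a::complex_normed_space set \<Rightarrow> bool" where
  "csubspace S \<longleftrightarrow> 0 \<in> S \<and> (\<forall>x\<in>S. \<forall>y\<in>S. x + y \<in> S) \<and> (\<forall>c. \<forall>x\<in>S. scaleC c x \<in> S)"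

definition closed_csubspace :: "'a::complex_normed_space set \<Rightarrow> bool" where
  "closed_csubspace S \<longleftrightarrow> csubspace S \<and> closed S"

definition cspan :: "'a::complex_normed_space set \<Rightarrow> 'a set" where
  "cspan A = module.span scaleC A"

definition cdependent :: "'a::complex_normed_space set \<Rightarrow> bool" where
  "cdependent A = module.dependent scaleC A"

definition join_sub :: "'a::complex_normed_space set set \<Rightarrow> 'a set" where
  "join_sub F = closure (cspan (\<Union>F))"

definition nest :: "'a::complex_normed_space set set \<Rightarrow> bool" where
  "nest \<E> \<longleftrightarrow>
     (\<forall>E\<in>\<E>. closed_csubspace E) \<and>
     (\<forall>E\<in>\<E>. \<forall>F\<in>\<E>. E \<subseteq> F \<or> F \<subseteq> E) \<and>
     {0} \<in> \<E> \<and> UNIV \<in> \<E> \<and>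
     (\<forall>F. F \<subseteq> \<E> \<longrightarrow> \<Inter>F \<in> \<E>) \<and>
     (\<forall>F. F \<subseteq> \<E> \<longrightarrow> join_sub F \<in> \<E>)"

definition support_function ::
  "'a::complex_normed_space set set \<Rightarrow> ('a set \<Rightarrow> 'a set) \<Rightarrow> bool" where
  "support_function \<E> \<Phi> \<longleftrightarrow>
     (\<forall>E\<in>\<E>. \<Phi> E \<in> \<E>) \<and> (\<forall>E\<in>\<E>. \<forall>F\<in>\<E>. E \<subseteq> F \<longrightarrow> \<Phi> E \<subseteq> \<Phi> F)"

definition bounded_clinear_op :: "('a::complex_normed_space \<Rightarrow> 'b::complex_normed_space) \<Rightarrow> bool" where
  "bounded_clinear_op T \<longleftrightarrow>
     (\<forall>x y. T (x + y) = T x + T y) \<and> (\<forall>c x. T (scaleC c x) = scaleC c (T x)) \<and>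
     (\<exists>K. \<forall>x. norm (T x) \<le> K * norm x)"

definition Mset :: "'a::complex_normed_space set set \<Rightarrow> ('a set \<Rightarrow> 'a set) \<Rightarrow> ('a \<Rightarrow> 'a) set" where
  "Mset \<E> \<Phi> = {T. bounded_clinear_op T \<and> (\<forall>E\<in>\<E>. T ` E \<subseteq> \<Phi> E)}"

definition has_rank :: "('a::complex_normed_space \<Rightarrow> 'b::complex_normed_space) \<Rightarrow> nat \<Rightarrow> bool" where
  "has_rank T n \<longleftrightarrow> (\<exists>B. finite B \<and> card B = n \<and> \<not> cdependent B \<and> cspan B = range T)"

end

theory Submission imports Defs begin

text \<open>By induction on the rank it suffices to split off from \<open>T\<close> one rank-one summand
  \<open>R \<in> \<M>(\<Phi>)\<close> such that \<open>T - R\<close> has rank one less. Among the nest elements on which \<open>T\<close>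
  does not vanish choose \<open>E\<^sub>1\<close> for which \<open>\<Phi>(E\<^sub>1) \<inter> ran T\<close> has least dimension, and
  put \<open>y = T x\<^sub>0 \<noteq> 0\<close> with \<open>x\<^sub>0 \<in> E\<^sub>1\<close>. Then \<open>y \<in> \<Phi>(E)\<close> for every \<open>E\<close> on which \<open>T\<close> does not
  vanish: if \<open>E\<^sub>1 \<subseteq> E\<close> by monotonicity of \<open>\<Phi>\<close>; otherwise \<open>E \<subseteq> E\<^sub>1\<close>, since the nest is a
  chain, and \<open>\<Phi>(E) \<inter> ran T \<subseteq> \<Phi>(E\<^sub>1) \<inter> ran T\<close> are equal by minimality of the dimension.
  Write \<open>ran T = \<complex>y \<oplus> H\<close> with \<open>H\<close> spanned by the rest of a basis through \<open>y\<close> and let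
  \<open>R x = c(T x) y\<close>, \<open>c\<close> the coefficient of \<open>y\<close>. Since \<open>H\<close> is closed, \<open>c\<close> is bounded by the
  norm divided by the distance from \<open>y\<close> to \<open>H\<close>; \<open>R\<close> maps \<open>E\<close> into \<open>\<Phi>(E)\<close> because it vanishes
  wherever \<open>T\<close> does, and \<open>T - R\<close> has range \<open>H\<close>.\<close>

interpretation cv: vector_space "scaleC :: complex \<Rightarrow> 'a::complex_normed_space \<Rightarrow> 'a"
  by unfold_locales (simp_all add: scaleC_add_right scaleC_add_left scaleC_scaleC scaleC_one)

lemma bounded_linear_scaleC_left:
  "bounded_linear (\<lambda>a::complex. scaleC a (b::'a::complex_normed_space))"
proof (rule bounded_linear_intro[where K="norm b"])
  fix r :: real and a :: complex
  have "scaleC (r *\<^sub>R a) b = scaleC (complex_of_real r) (scaleC a b)"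
    by (simp add: scaleR_conv_of_real)
  then show "scaleC (r *\<^sub>R a) b = r *\<^sub>R scaleC a b"
    by (simp only: scaleC_of_real)
qed (simp_all add: scaleC_add_left norm_scaleC)

lemma infdist_scaleC_le:
  fixes S :: "'a::complex_normed_space set"
  assumes "cv.subspace S" "s \<in> S"
  shows "cmod t * infdist b S \<le> norm (s + scaleC t b)"
proof (cases "t = 0")
  case False
  define s' where "s' = scaleC (- 1 / t) s"
  have "s' \<in> S"
    unfolding s'_def using assms cv.subspace_scale by blast
  have "s + scaleC t b = scaleC t (b - s')"
    using False by (simp add: s'_def cv.scale_right_diff_distrib scaleC_add_right add.commute)
  then have "norm (s + scaleC t b) = cmod t * dist b s'"
    by (simp add: norm_scaleC dist_norm)
  moreover have "infdist b S \<le> dist b s'"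
    using \<open>s' \<in> S\<close> by (rule infdist_le)
  ultimately show ?thesis
    by (simp add: mult_left_mono)
qed simp

lemma closed_span_insert:
  fixes C :: "'a::complex_normed_space set"
  assumes closed: "closed (cv.span C)" and notin: "b \<notin> cv.span C"
  shows "closed (cv.span (insert b C))"
  unfolding closed_sequential_limits
proof (intro allI impI, elim conjE)
  let ?S = "cv.span C"
  define d where "d = infdist b ?S"
  have "d > 0"
    unfolding d_def using infdist_pos_not_in_closed[OF closed _ notin] cv.span_zero by blast
  fix x l assume x_in: "\<forall>n. x n \<in> cv.span (insert b C)" and "x \<longlonglongrightarrow> l"
  have "\<forall>n. \<exists>k. x n - scaleC k b \<in> ?S"
    using x_in cv.span_breakdown_eq by blast
  then obtain t where t: "\<And>n. x n - scaleC (t n) b \<in> ?S"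
    by metis
  have t_diff: "cmod (t m - t n) * d \<le> dist (x m) (x n)" for m n
  proof -
    have "(x m - scaleC (t m) b) - (x n - scaleC (t n) b) \<in> ?S"
      using t[of m] t[of n] by (rule cv.subspace_diff[OF cv.subspace_span])
    from infdist_scaleC_le[OF cv.subspace_span this, of "t m - t n" b]
    show ?thesis
      by (simp add: d_def dist_norm cv.scale_left_diff_distrib)
  qed
  have "Cauchy t"
  proof (rule metric_CauchyI)
    fix e :: real assume "e > 0"
    then obtain M where "\<forall>m\<ge>M. \<forall>n\<ge>M. dist (x m) (x n) < e * d"
      using \<open>x \<longlonglongrightarrow> l\<close> \<open>d > 0\<close> LIMSEQ_imp_Cauchy metric_CauchyD by (metis mult_pos_pos)
    then have "\<forall>m\<ge>M. \<forall>n\<ge>M. cmod (t m - t n) * d < e * d"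
      using t_diff by (meson le_less_trans)
    then show "\<exists>M. \<forall>m\<ge>M. \<forall>n\<ge>M. dist (t m) (t n) < e"
      using \<open>d > 0\<close> by (auto simp: dist_norm)
  qed
  then obtain \<tau> where "t \<longlonglongrightarrow> \<tau>"
    using Cauchy_convergent_iff convergent_def by blast
  then have "(\<lambda>n. x n - scaleC (t n) b) \<longlonglongrightarrow> l - scaleC \<tau> b"
    using \<open>x \<longlonglongrightarrow> l\<close> bounded_linear.tendsto[OF bounded_linear_scaleC_left] by (intro tendsto_diff)
  then have "l - scaleC \<tau> b \<in> ?S"
    by (rule closed_sequentially[OF closed t])
  then show "l \<in> cv.span (insert b C)"
    using cv.span_breakdown_eq by blast
qed

lemma closed_span_finite:
  fixes C :: "'a::complex_normed_space set"
  assumes "finite C"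
  shows "closed (cv.span C)"
  using assms
proof (induction C rule: finite_induct)
  case (insert b C)
  then show ?case
    by (cases "b \<in> cv.span C") (simp_all add: cv.span_redundant closed_span_insert)
qed simp

lemma subset_subspace_of_dim_le:
  fixes A :: "'a::complex_normed_space set"
  assumes "cv.subspace A" "A \<subseteq> V" "V \<subseteq> cv.span W" "finite W" "cv.dim V \<le> cv.dim A"
  shows "V \<subseteq> A"
proof -
  obtain BA where BA: "BA \<subseteq> A" "cv.independent BA" "A \<subseteq> cv.span BA" "card BA = cv.dim A"
    by (rule cv.basis_exists)
  obtain BV where BV: "BA \<subseteq> BV" "BV \<subseteq> V" "cv.independent BV" "V \<subseteq> cv.span BV"
    using cv.maximal_independent_subset_extend BA(1,2) assms(2) by (metis order_trans)
  have "finite BV"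
    using cv.independent_span_bound[OF assms(4) BV(3)] BV(2) assms(3) by blast
  moreover have "card BV \<le> card BA"
    using cv.basis_card_eq_dim[OF BV(2,4,3)] BA(4) assms(5) by simp
  ultimately have "BA = BV"
    using card_subset_eq[OF _ BV(1)] card_mono[OF _ BV(1)] by (meson le_antisym)
  then have "V \<subseteq> cv.span BA"
    using BV(4) by simp
  also have "\<dots> \<subseteq> A"
    using cv.span_minimal[OF BA(1) assms(1)] .
  finally show ?thesis .
qed

text \<open>The coefficient of \<open>y\<close> in \<open>z \<in> span (insert y H)\<close> for the decomposition
  \<open>\<complex>y \<oplus> H\<close>; an unspecified value for other \<open>z\<close>.\<close>
definition coord :: "'a::complex_normed_space set \<Rightarrow> 'a \<Rightarrow> 'a \<Rightarrow> complex" where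
  "coord H y z = (SOME c. z - scaleC c y \<in> H)"

context
  fixes H :: "'a::complex_normed_space set" and y :: 'a
  assumes subspace: "cv.subspace H" and notin: "y \<notin> H"
begin

lemma coord_eqI:
  assumes "z - scaleC c y \<in> H"
  shows "coord H y z = c"
proof -
  have unique: "c' = c" if "z - scaleC c' y \<in> H" for c'
  proof (rule ccontr)
    assume "c' \<noteq> c"
    have "(z - scaleC c' y) - (z - scaleC c y) \<in> H"
      using cv.subspace_diff[OF subspace that assms] .
    then have "scaleC (inverse (c - c')) (scaleC (c - c') y) \<in> H"
      using cv.subspace_scale[OF subspace] by (simp add: cv.scale_left_diff_distrib)
    with \<open>c' \<noteq> c\<close> notin show False
      by (simp add: scaleC_one)
  qed
  show ?thesis
    unfolding coord_def using assms by (blast intro: someI2 unique)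
qed

lemma coord_in_subspace:
  assumes "z \<in> cv.span (insert y H)"
  shows "z - scaleC (coord H y z) y \<in> H"
proof -
  have "\<exists>c. z - scaleC c y \<in> H"
    using assms cv.span_breakdown_eq cv.span_eq_iff[THEN iffD2, OF subspace] by metis
  then show ?thesis
    unfolding coord_def by (rule someI_ex)
qed

lemma coord_of_subspace: "h \<in> H \<Longrightarrow> coord H y h = 0"
  by (rule coord_eqI) simp

lemma coord_self: "coord H y y = 1"
  by (rule coord_eqI) (simp add: scaleC_one cv.subspace_0[OF subspace])

lemma coord_add:
  assumes "z \<in> cv.span (insert y H)" "w \<in> cv.span (insert y H)"
  shows "coord H y (z + w) = coord H y z + coord H y w"
proof (rule coord_eqI)
  have "(z - scaleC (coord H y z) y) + (w - scaleC (coord H y w) y) \<in> H"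
    using cv.subspace_add[OF subspace coord_in_subspace[OF assms(1)] coord_in_subspace[OF assms(2)]] .
  then show "z + w - scaleC (coord H y z + coord H y w) y \<in> H"
    by (simp add: scaleC_add_left algebra_simps)
qed

lemma coord_scaleC:
  assumes "z \<in> cv.span (insert y H)"
  shows "coord H y (scaleC a z) = a * coord H y z"
proof (rule coord_eqI)
  have "scaleC a (z - scaleC (coord H y z) y) \<in> H"
    using cv.subspace_scale[OF subspace coord_in_subspace[OF assms]] .
  then show "scaleC a z - scaleC (a * coord H y z) y \<in> H"
    by (simp add: cv.scale_right_diff_distrib)
qed

lemma norm_coord_le:
  assumes "z \<in> cv.span (insert y H)"
  shows "cmod (coord H y z) * infdist y H \<le> norm z"
  using infdist_scaleC_le[OF subspace coord_in_subspace[OF assms], of "coord H y z" y] by simp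

end

lemma bounded_clinear_op_diff:
  assumes "bounded_clinear_op T" "bounded_clinear_op S"
  shows "bounded_clinear_op (\<lambda>x. T x - S x)"
proof -
  obtain K L where "\<And>x. norm (T x) \<le> K * norm x" "\<And>x. norm (S x) \<le> L * norm x"
    using assms unfolding bounded_clinear_op_def by metis
  then have "norm (T x - S x) \<le> (K + L) * norm x" for x
    by (smt (verit, best) distrib_right norm_triangle_ineq4)
  then show ?thesis
    using assms unfolding bounded_clinear_op_def by (auto simp: cv.scale_right_diff_distrib)
qed

lemma bounded_clinear_op_coord:
  assumes T: "bounded_clinear_op T" and H: "cv.subspace H" "closed H" "y \<notin> H"
    and range: "range T \<subseteq> cv.span (insert y H)"
  shows "bounded_clinear_op (\<lambda>x. scaleC (coord H y (T x)) y)"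
proof -
  obtain K where K: "\<And>x. norm (T x) \<le> K * norm x"
    using T unfolding bounded_clinear_op_def by metis
  define d where "d = infdist y H"
  have "d > 0"
    unfolding d_def using infdist_pos_not_in_closed H cv.subspace_0 by blast
  have bound: "norm (scaleC (coord H y (T x)) y) \<le> (K * norm y / d) * norm x" for x
  proof -
    have "cmod (coord H y (T x)) * d \<le> K * norm x"
      using norm_coord_le[OF H(1,3), of "T x"] K[of x] range unfolding d_def by fastforce
    then have "cmod (coord H y (T x)) \<le> K * norm x / d"
      using \<open>d > 0\<close> by (simp add: le_divide_eq)
    then have "cmod (coord H y (T x)) * norm y \<le> (K * norm x / d) * norm y"
      by (rule mult_right_mono) simp
    then show ?thesis
      by (simp add: norm_scaleC mult_ac)
  qed
  have add: "coord H y (T (x + x')) = coord H y (T x) + coord H y (T x')" for x x'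
    using T range coord_add[OF H(1,3), of "T x" "T x'"] unfolding bounded_clinear_op_def by auto
  have scale: "coord H y (T (scaleC c x)) = c * coord H y (T x)" for c x
    using T range coord_scaleC[OF H(1,3), of "T x" c] unfolding bounded_clinear_op_def by auto
  show ?thesis
    unfolding bounded_clinear_op_def using add scale bound
    by (intro conjI allI exI[of _ "K * norm y / d"]) (simp_all add: scaleC_add_left del: norm_scaleC)
qed

lemma nest_subspace: "nest \<E> \<Longrightarrow> E \<in> \<E> \<Longrightarrow> cv.subspace E"
  by (simp add: nest_def closed_csubspace_def csubspace_def cv.subspace_def)

lemma Mset_diff:
  assumes "nest \<E>" "support_function \<E> \<Phi>" "T \<in> Mset \<E> \<Phi>" "S \<in> Mset \<E> \<Phi>"
  shows "(\<lambda>x. T x - S x) \<in> Mset \<E> \<Phi>"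
proof -
  have "T x - S x \<in> \<Phi> E" if "E \<in> \<E>" "x \<in> E" for E x
  proof (rule cv.subspace_diff)
    show "cv.subspace (\<Phi> E)"
      using assms(1,2) \<open>E \<in> \<E>\<close> nest_subspace unfolding support_function_def by blast
    show "T x \<in> \<Phi> E" "S x \<in> \<Phi> E"
      using assms(3,4) that unfolding Mset_def by blast+
  qed
  then show ?thesis
    using assms(3,4) bounded_clinear_op_diff unfolding Mset_def by blast
qed

lemma has_rank_iff:
  "has_rank T n \<longleftrightarrow> (\<exists>B. finite B \<and> card B = n \<and> cv.independent B \<and> cv.span B = range T)"
  by (simp add: has_rank_def cspan_def cdependent_def)

lemma has_rankI:
  assumes "finite B" "card B = n" "cv.independent B" "cv.span B = range T"
  shows "has_rank T n"
  using assms unfolding has_rank_iff by blast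

lemma has_rank_0_imp_zero:
  assumes "has_rank T 0"
  shows "T = (\<lambda>x. 0)"
proof -
  obtain B where "finite B" "card B = 0" "cv.span B = range T"
    using assms unfolding has_rank_iff by blast
  then have "range T = {0}"
    by simp
  then show ?thesis
    by fastforce
qed

lemma has_rank_Suc_nonzero:
  assumes "has_rank T (Suc m)"
  shows "\<exists>x. T x \<noteq> 0"
proof -
  obtain B where B: "card B = Suc m" "cv.independent B" "cv.span B = range T"
    using assms unfolding has_rank_iff by blast
  then obtain b where "b \<in> B"
    by fastforce
  then have "b \<noteq> 0" "b \<in> range T"
    using B cv.dependent_zero cv.span_base by blast+
  then show ?thesis
    by blast
qed

lemma has_rank_Suc_basis_insert:
  assumes "has_rank T (Suc m)" "y \<in> range T" "y \<noteq> 0"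
  obtains C where "finite C" "card C = m" "cv.independent C" "y \<notin> cv.span C"
    "cv.span (insert y C) = range T"
proof -
  obtain B where B: "finite B" "card B = Suc m" "cv.independent B" "cv.span B = range T"
    using assms(1) unfolding has_rank_iff by blast
  have "cv.independent {y}"
    using assms(3) by simp
  then obtain B' where B': "{y} \<subseteq> B'" "B' \<subseteq> range T" "cv.independent B'" "range T \<subseteq> cv.span B'"
    using cv.maximal_independent_subset_extend[of "{y}" "range T"] assms(2) by blast
  have "finite B'"
    using cv.independent_span_bound[OF B(1) B'(3)] B'(2) B(4) by blast
  have "card B' = card B"
    using cv.basis_card_eq_dim[OF B'(2,4,3)] cv.dim_span_eq_card_independent[OF B(3)] B(4) by simp
  have "cv.span B' = range T"
    using cv.span_subspace[OF B'(2,4)] B(4) cv.subspace_span by metis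
  show ?thesis
  proof
    show "finite (B' - {y})" "card (B' - {y}) = m"
      using \<open>finite B'\<close> \<open>card B' = card B\<close> B(2) B'(1) by simp_all
    show "cv.independent (B' - {y})"
      using cv.independent_mono[OF B'(3)] by blast
    show "y \<notin> cv.span (B' - {y})"
      using B'(1,3) cv.dependent_def by blast
    show "cv.span (insert y (B' - {y})) = range T"
      using B'(1) \<open>cv.span B' = range T\<close> by (simp add: insert_absorb)
  qed
qed

lemma has_rank_Suc_split_rank_one:
  assumes T: "bounded_clinear_op T" and rank: "has_rank T (Suc m)"
    and y: "y \<in> range T" "y \<noteq> 0"
  obtains c :: "'a::complex_normed_space \<Rightarrow> complex" where
    "bounded_clinear_op (\<lambda>x. scaleC (c x) y)" "has_rank (\<lambda>x. scaleC (c x) y) 1"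
    "has_rank (\<lambda>x. T x - scaleC (c x) y) m" "\<And>x. T x = 0 \<Longrightarrow> c x = 0"
proof -
  obtain C where C: "finite C" "card C = m" "cv.independent C" "y \<notin> cv.span C"
    "cv.span (insert y C) = range T"
    using has_rank_Suc_basis_insert[OF rank y] by blast
  define H where "H = cv.span C"
  have H: "cv.subspace H" "closed H" "y \<notin> H"
    unfolding H_def using cv.subspace_span closed_span_finite[OF C(1)] C(4) by simp_all
  have range_T: "range T = cv.span (insert y H)"
    unfolding H_def C(5)[symmetric] by (simp add: cv.span_insert cv.span_span)
  then have T_in: "T x \<in> cv.span (insert y H)" for x
    by blast
  have "H \<subseteq> range T"
    unfolding range_T using cv.span_superset[of "insert y H"] by blast
  define c where "c x = coord H y (T x)" for x
  obtain x0 where "y = T x0"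
    using y(1) by blast
  show thesis
  proof (rule that)
    show "bounded_clinear_op (\<lambda>x. scaleC (c x) y)"
      unfolding c_def by (rule bounded_clinear_op_coord[OF T H]) (simp add: range_T)
    show "c x = 0" if "T x = 0" for x
      unfolding c_def that using coord_of_subspace[OF H(1,3) cv.subspace_0[OF H(1)]] .
    have "c (scaleC k x0) = k" for k
    proof -
      have "T (scaleC k x0) = scaleC k y"
        using T \<open>y = T x0\<close> unfolding bounded_clinear_op_def by simp
      then show ?thesis
        unfolding c_def using coord_scaleC[OF H(1,3) T_in[of x0], of k] coord_self[OF H(1,3)]
          \<open>y = T x0\<close> by simp
    qed
    then have "scaleC k y \<in> range (\<lambda>x. scaleC (c x) y)" for k
      by (metis rangeI)
    then have "range (\<lambda>x. scaleC (c x) y) = range (\<lambda>k. scaleC k y)"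
      by blast
    then show "has_rank (\<lambda>x. scaleC (c x) y) 1"
      using y(2) by (intro has_rankI[of "{y}"]) (simp_all add: cv.span_singleton)
    have "range (\<lambda>x. T x - scaleC (c x) y) = H"
    proof (intro antisym subsetI)
      fix z assume "z \<in> range (\<lambda>x. T x - scaleC (c x) y)"
      then show "z \<in> H"
        unfolding c_def using coord_in_subspace[OF H(1,3) T_in] by blast
    next
      fix h assume "h \<in> H"
      then obtain x where "h = T x"
        using \<open>H \<subseteq> range T\<close> by blast
      then have "T x - scaleC (c x) y = h"
        unfolding c_def using coord_of_subspace[OF H(1,3) \<open>h \<in> H\<close>] by simp
      then show "h \<in> range (\<lambda>x. T x - scaleC (c x) y)"
        by (rule range_eqI[OF sym])
    qed
    then show "has_rank (\<lambda>x. T x - scaleC (c x) y) m"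
      unfolding H_def by (intro has_rankI[OF C(1-3)]) (rule sym)
  qed
qed

lemma nest_common_range_vector:
  assumes nest: "nest \<E>" and sf: "support_function \<E> \<Phi>" and T: "T \<in> Mset \<E> \<Phi>"
    and W: "finite W" "cv.span W = range T" and nonzero: "\<exists>x. T x \<noteq> 0"
  obtains y where "y \<in> range T" "y \<noteq> 0" "\<And>E x. E \<in> \<E> \<Longrightarrow> x \<in> E \<Longrightarrow> T x \<noteq> 0 \<Longrightarrow> y \<in> \<Phi> E"
proof -
  define S where "S = {E \<in> \<E>. \<exists>x\<in>E. T x \<noteq> 0}"
  have "UNIV \<in> \<E>"
    using nest by (simp add: nest_def)
  then have "UNIV \<in> S"
    using nonzero unfolding S_def by blast
  then obtain E1 where "E1 \<in> S"
    and minimal: "\<And>E. E \<in> S \<Longrightarrow> cv.dim (\<Phi> E1 \<inter> range T) \<le> cv.dim (\<Phi> E \<inter> range T)"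
    using ex_has_least_nat[of "\<lambda>E. E \<in> S" UNIV "\<lambda>E. cv.dim (\<Phi> E \<inter> range T)"] by blast
  then obtain x0 where "E1 \<in> \<E>" "x0 \<in> E1" "T x0 \<noteq> 0"
    unfolding S_def by blast
  have "T x0 \<in> \<Phi> E1"
    using T \<open>E1 \<in> \<E>\<close> \<open>x0 \<in> E1\<close> unfolding Mset_def by blast
  have "T x0 \<in> \<Phi> E" if "E \<in> S" for E
  proof -
    have "E \<in> \<E>"
      using that unfolding S_def by blast
    consider "E1 \<subseteq> E" | "E \<subseteq> E1"
      using nest \<open>E \<in> \<E>\<close> \<open>E1 \<in> \<E>\<close> unfolding nest_def by blast
    then show ?thesis
    proof cases
      case 1
      then show ?thesis
        using sf \<open>E \<in> \<E>\<close> \<open>E1 \<in> \<E>\<close> \<open>T x0 \<in> \<Phi> E1\<close> unfolding support_function_def by blast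
    next
      case 2
      have "\<Phi> E1 \<inter> range T \<subseteq> \<Phi> E \<inter> range T"
      proof (rule subset_subspace_of_dim_le[OF _ _ _ W(1) minimal[OF that]])
        have "\<Phi> E \<in> \<E>"
          using sf \<open>E \<in> \<E>\<close> unfolding support_function_def by blast
        then show "cv.subspace (\<Phi> E \<inter> range T)"
          using nest_subspace[OF nest] cv.subspace_span[of W] W(2) by (simp add: cv.subspace_inter)
        show "\<Phi> E \<inter> range T \<subseteq> \<Phi> E1 \<inter> range T"
          using sf 2 \<open>E \<in> \<E>\<close> \<open>E1 \<in> \<E>\<close> unfolding support_function_def by blast
        show "\<Phi> E1 \<inter> range T \<subseteq> cv.span W"
          using W(2) by blast
      qed
      then show ?thesis
        using \<open>T x0 \<in> \<Phi> E1\<close> by blast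
    qed
  qed
  then show thesis
    using that[of "T x0"] \<open>T x0 \<noteq> 0\<close> unfolding S_def by blast
qed

lemma Mset_rank_Suc_split:
  assumes nest: "nest \<E>" and sf: "support_function \<E> \<Phi>"
    and T: "T \<in> Mset \<E> \<Phi>" and rank: "has_rank T (Suc m)"
  obtains R where "R \<in> Mset \<E> \<Phi>" "has_rank R 1"
    "(\<lambda>x. T x - R x) \<in> Mset \<E> \<Phi>" "has_rank (\<lambda>x. T x - R x) m"
proof -
  obtain W where W: "finite W" "cv.span W = range T"
    using rank unfolding has_rank_iff by blast
  obtain y where y: "y \<in> range T" "y \<noteq> 0"
    and y_in_support: "\<And>E x. E \<in> \<E> \<Longrightarrow> x \<in> E \<Longrightarrow> T x \<noteq> 0 \<Longrightarrow> y \<in> \<Phi> E"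
    using nest_common_range_vector[OF nest sf T W has_rank_Suc_nonzero[OF rank]] by blast
  have "bounded_clinear_op T"
    using T unfolding Mset_def by blast
  then obtain c where c: "bounded_clinear_op (\<lambda>x. scaleC (c x) y)" "has_rank (\<lambda>x. scaleC (c x) y) 1"
    "has_rank (\<lambda>x. T x - scaleC (c x) y) m" "\<And>x. T x = 0 \<Longrightarrow> c x = 0"
    using has_rank_Suc_split_rank_one rank y by blast
  have "scaleC (c x) y \<in> \<Phi> E" if "E \<in> \<E>" "x \<in> E" for E x
  proof -
    have "cv.subspace (\<Phi> E)"
      using nest sf \<open>E \<in> \<E>\<close> nest_subspace unfolding support_function_def by blast
    then show ?thesis
      using y_in_support[OF that] c(4)[of x] cv.subspace_scale[of "\<Phi> E" y] cv.subspace_0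
      by (cases "T x = 0") simp_all
  qed
  then have "(\<lambda>x. scaleC (c x) y) \<in> Mset \<E> \<Phi>"
    unfolding Mset_def using c(1) by blast
  then show thesis
    using that Mset_diff[OF nest sf T] c(2,3) by blast
qed

theorem mainTheorem7:
  fixes \<E> :: "'a::{complex_normed_space, banach} set set"
    and \<Phi> :: "'a set \<Rightarrow> 'a set"
    and T :: "'a \<Rightarrow> 'a"
    and n :: nat
  assumes "nest \<E>"
    and "support_function \<E> \<Phi>"
    and "T \<in> Mset \<E> \<Phi>"
    and "has_rank T n"
  shows "\<exists>R :: nat \<Rightarrow> 'a \<Rightarrow> 'a.
           (\<forall>i<n. R i \<in> Mset \<E> \<Phi> \<and> has_rank (R i) 1) \<and>
           T = (\<lambda>x. \<Sum>i<n. R i x)"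
  using assms(3,4)
proof (induction n arbitrary: T)
  case 0
  then show ?case
    using has_rank_0_imp_zero by auto
next
  case (Suc m)
  obtain R0 where R0: "R0 \<in> Mset \<E> \<Phi>" "has_rank R0 1"
    "(\<lambda>x. T x - R0 x) \<in> Mset \<E> \<Phi>" "has_rank (\<lambda>x. T x - R0 x) m"
    using Mset_rank_Suc_split[OF assms(1,2) Suc.prems] by blast
  obtain R where R: "\<forall>i<m. R i \<in> Mset \<E> \<Phi> \<and> has_rank (R i) 1"
    "(\<lambda>x. T x - R0 x) = (\<lambda>x. \<Sum>i<m. R i x)"
    using Suc.IH[OF R0(3,4)] by blast
  have "\<forall>i<Suc m. (R(m := R0)) i \<in> Mset \<E> \<Phi> \<and> has_rank ((R(m := R0)) i) 1"
    using R(1) R0(1,2) less_Suc_eq by auto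
  moreover have "T = (\<lambda>x. \<Sum>i<Suc m. (R(m := R0)) i x)"
    using R(2) by (auto simp: fun_eq_iff algebra_simps)
  ultimately show ?case
    by blast
qed

end
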